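(* Let $1,2,3,4$ be four distinct vertices of $G$ such that $G[\{1,2,3,4\}]$ has edge set exactly $\{12,13,23,24,34\}$. If $\Gamma_G$ is population monotonic, then $w_{23}\ge w_{12}+w_{13}$ and $w_{23}\ge w_{24}+w_{34}$.
   Context: $G=(V,E;w)$ is a finite simple graph with edge weights $w:E\to\mathbb{R}$, $w_e>0$ for all $e\in E$; $w_{ij}$ denotes the weight of edge $ij$. The matching game on $G$ is the cooperative game $\Gamma_G=(N,\gamma)$ with player set $N=V$ and, for $S\subseteq N$, $\gamma(S)$ equal to the maximum weight of a matching in the induced subgraph $G[S]$ (so $\gamma(\emptyset)=0$). A population monotonic allocation scheme (PMAS) is a family $(\boldsymbol{x}_S)_{\emptyset\neq S\subseteq N}$ with $\boldsymbol{x}_S=(x_{S,i})_{i\in S}\in\mathbb{R}^S$ such that (efficiency) $\sum_{i\in S}x_{S,i}=\gamma(S)$ for every nonempty $S\subseteq N$, and (monotonicity) $x_{S,i}\le x_{T,i}$ whenever $\emptyset\ne S\subseteq T\subseteq N$ and $i\in S$. $\Gamma_G$ is called population monotonic if it admits a PMAS. *)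

theory Defs
  imports Complex_Main
begin

definition simple_graph :: "'a set \<Rightarrow> 'a set set \<Rightarrow> bool" where
  "simple_graph V E \<longleftrightarrow> finite V \<and> (\<forall>e\<in>E. \<exists>u v. u \<noteq> v \<and> u \<in> V \<and> v \<in> V \<and> e = {u, v})"

definition pos_weighted :: "'a set set \<Rightarrow> ('a set \<Rightarrow> real) \<Rightarrow> bool" where
  "pos_weighted E w \<longleftrightarrow> (\<forall>e\<in>E. w e > 0)"

definition matching_in :: "'a set set \<Rightarrow> 'a set \<Rightarrow> 'a set set \<Rightarrow> bool" where
  "matching_in E S M \<longleftrightarrow> M \<subseteq> E \<and> (\<forall>e\<in>M. e \<subseteq> S) \<and>
     (\<forall>e\<in>M. \<forall>f\<in>M. e \<noteq> f \<longrightarrow> e \<inter> f = {})"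

definition gamma :: "'a set set \<Rightarrow> ('a set \<Rightarrow> real) \<Rightarrow> 'a set \<Rightarrow> real" where
  "gamma E w S = Max {sum w M | M. matching_in E S M}"

text \<open>Population monotonic allocation scheme: x S i is the payoff of i in
  coalition S (only meaningful for nonempty S \<subseteq> N and i \<in> S).\<close>

definition is_PMAS :: "'a set \<Rightarrow> ('a set \<Rightarrow> real) \<Rightarrow> ('a set \<Rightarrow> 'a \<Rightarrow> real) \<Rightarrow> bool" where
  "is_PMAS N v x \<longleftrightarrow>
     (\<forall>S. S \<subseteq> N \<and> S \<noteq> {} \<longrightarrow> (\<Sum>i\<in>S. x S i) = v S) \<and>
     (\<forall>S T i. S \<noteq> {} \<and> S \<subseteq> T \<and> T \<subseteq> N \<and> i \<in> S \<longrightarrow> x S i \<le> x T i)"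

definition population_monotonic :: "'a set \<Rightarrow> ('a set \<Rightarrow> real) \<Rightarrow> bool" where
  "population_monotonic N v \<longleftrightarrow> (\<exists>x. is_PMAS N v x)"

end

theory Submission
  imports Defs
begin

(* Write x_S(i) for the PMAS and a, b, c, d, e for the weights of 12, 13, 23, 24, 34.
   For distinct i, j, k, monotonicity and efficiency give x_ij(i) + gamma(jk) <= gamma(ijk).
   On three vertices any two edges meet, so gamma of a triple is its largest edge weight.
   If c is the largest weight in the triangle 123, then x_12(1) <= 0, so x_12(2) >= a and
   a + b <= x_12(2) + gamma(13) <= gamma(123) = c.  If a were the largest, then x_13(3) <= 0,
   so x_13(1) >= b and b + e <= gamma(134) = max b e, impossible for positive weights; the
   case of b is symmetric, using the path 124.  The second inequality is the first one after
   exchanging the vertices 1 and 4. *)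

lemma PMAS_efficient:
  assumes "is_PMAS N v x" "S \<subseteq> N" "S \<noteq> {}"
  shows "(\<Sum>i\<in>S. x S i) = v S"
  using assms unfolding is_PMAS_def by blast

lemma PMAS_monotone:
  assumes "is_PMAS N v x" "S \<noteq> {}" "S \<subseteq> T" "T \<subseteq> N" "i \<in> S"
  shows "x S i \<le> x T i"
  using assms unfolding is_PMAS_def by blast

lemma PMAS_pair_efficient:
  assumes "is_PMAS N v x" "i \<in> N" "j \<in> N" "i \<noteq> j"
  shows "x {i, j} i + x {i, j} j = v {i, j}"
  using PMAS_efficient[OF assms(1), of "{i, j}"] assms(2-4) by simp

lemma PMAS_pair_payoff_le:
  assumes "is_PMAS N v x" "i \<in> N" "j \<in> N" "k \<in> N" "distinct [i, j, k]"
  shows "x {i, j} i + v {j, k} \<le> v {i, j, k}"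
proof -
  let ?T = "{i, j, k}"
  have mono: "x S l \<le> x ?T l" if "S \<subseteq> ?T" "l \<in> S" for S l
    using PMAS_monotone[OF assms(1)] assms(2-4) that by blast
  have "x {i, j} i + v {j, k} = x {i, j} i + x {j, k} j + x {j, k} k"
    using PMAS_pair_efficient[OF assms(1,3,4)] assms(5) by simp
  also have "\<dots> \<le> x ?T i + x ?T j + x ?T k"
    using mono[of "{i, j}" i] mono[of "{j, k}" j] mono[of "{j, k}" k] by simp
  also have "\<dots> = v ?T"
    using PMAS_efficient[OF assms(1), of ?T] assms(2-5) by simp
  finally show ?thesis .
qed

lemma finite_matching_weights:
  assumes "finite S"
  shows "finite {sum w M | M. matching_in E S M}"
proof -
  have "{M. matching_in E S M} \<subseteq> Pow (Pow S)"
    unfolding matching_in_def by auto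
  then have "finite {M. matching_in E S M}"
    using assms by (simp add: finite_subset)
  then show ?thesis
    by (simp add: setcompr_eq_image)
qed

lemma weight_le_gamma:
  assumes "finite S" "e \<in> E" "e \<subseteq> S"
  shows "w e \<le> gamma E w S"
proof -
  have "matching_in E S {e}"
    using assms by (simp add: matching_in_def)
  then show ?thesis
    unfolding gamma_def using finite_matching_weights[OF assms(1)]
    by (intro Max_ge) force+
qed

lemma gamma_le_if_edges_intersect:
  assumes "finite S"
    and intersect: "\<And>e f. e \<in> E \<Longrightarrow> f \<in> E \<Longrightarrow> e \<subseteq> S \<Longrightarrow> f \<subseteq> S \<Longrightarrow> e \<noteq> f \<Longrightarrow> e \<inter> f \<noteq> {}"
    and bound: "\<And>e. e \<in> E \<Longrightarrow> e \<subseteq> S \<Longrightarrow> w e \<le> m" and "0 \<le> m"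
  shows "gamma E w S \<le> m"
proof -
  have "sum w M \<le> m" if M: "matching_in E S M" for M
  proof (cases "M = {}")
    case False
    then obtain e where "e \<in> M"
      by blast
    have "f = e" if "f \<in> M" for f
      using M intersect[of f e] \<open>e \<in> M\<close> that unfolding matching_in_def by blast
    with \<open>e \<in> M\<close> have "M = {e}"
      by blast
    then show ?thesis
      using M bound unfolding matching_in_def by simp
  qed (simp add: \<open>0 \<le> m\<close>)
  moreover have "matching_in E S {}"
    by (simp add: matching_in_def)
  ultimately show ?thesis
    unfolding gamma_def using finite_matching_weights[OF assms(1)]
    by (subst Max_le_iff) auto
qed

lemma simple_graph_edge_card:
  assumes "simple_graph V E" "e \<in> E"
  shows "card e = 2"
proof -
  obtain u v where "u \<noteq> v" "e = {u, v}"
    using assms unfolding simple_graph_def by blast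
  then show ?thesis
    by simp
qed

lemma simple_graph_edges_intersect:
  assumes "simple_graph V E" "finite S" "card S \<le> 3"
    and "e \<in> E" "f \<in> E" "e \<subseteq> S" "f \<subseteq> S"
  shows "e \<inter> f \<noteq> {}"
proof
  assume "e \<inter> f = {}"
  then have "card (e \<union> f) = card e + card f"
    using assms(2,6,7) by (intro card_Un_disjoint) (auto intro: finite_subset)
  also have "\<dots> = 4"
    using simple_graph_edge_card[OF assms(1)] assms(4,5) by simp
  finally have "4 \<le> card S"
    using card_mono[OF assms(2)] assms(6,7) by (metis Un_subset_iff)
  then show False
    using assms(3) by simp
qed

lemma gamma_triple_le:
  assumes "simple_graph V E" "{e \<in> E. e \<subseteq> {i, j, k}} \<subseteq> F"
    and "\<And>f. f \<in> F \<Longrightarrow> w f \<le> m" "0 \<le> m"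
  shows "gamma E w {i, j, k} \<le> m"
proof (rule gamma_le_if_edges_intersect)
  have "card {i, j, k} \<le> 3"
    by (simp add: card_insert_if)
  then show "e \<inter> f \<noteq> {}" if "e \<in> E" "f \<in> E" "e \<subseteq> {i, j, k}" "f \<subseteq> {i, j, k}" for e f
    by (intro simple_graph_edges_intersect[OF assms(1) _ _ that]) simp_all
qed (use assms in auto)

lemma diamond_payoff_inequality:
  fixes a b c d e g p p' q q' :: real
  assumes positive: "a > 0" "b > 0" "d > 0" "e > 0"
    and pair12: "a \<le> p + p'" and pair13: "b \<le> q + q'"
    and triangle: "p + c \<le> g" "p' + b \<le> g" "q' + a \<le> g" "g \<le> max a (max b c)"
    and path134: "q + e \<le> max b e" and path124: "p + d \<le> max a d"
  shows "a + b \<le> c"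
proof -
  have "\<not> (b \<le> a \<and> c \<le> a)"
  proof
    assume "b \<le> a \<and> c \<le> a"
    then have "max a (max b c) = a"
      by simp
    then have "b \<le> q"
      using pair13 triangle(3,4) by linarith
    then show False
      using path134 positive by (cases "b \<le> e") (simp_all add: max_def)
  qed
  moreover have "\<not> (a \<le> b \<and> c \<le> b)"
  proof
    assume "a \<le> b \<and> c \<le> b"
    then have "max a (max b c) = b"
      by simp
    then have "a \<le> p"
      using pair12 triangle(2,4) by linarith
    then show False
      using path124 positive by (cases "a \<le> d") (simp_all add: max_def)
  qed
  ultimately have "max a (max b c) = c"
    by (auto simp: max_def)
  then show ?thesis
    using pair12 triangle(1,2,4) by linarith
qed

lemma PMAS_diamond_inequality:
  fixes a b c d e :: real
  assumes x: "is_PMAS N v x"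
    and N: "v1 \<in> N" "v2 \<in> N" "v3 \<in> N" "v4 \<in> N" and dist: "distinct [v1, v2, v3, v4]"
    and positive: "a > 0" "b > 0" "d > 0" "e > 0"
    and pairs: "a \<le> v {v1,v2}" "b \<le> v {v1,v3}" "c \<le> v {v2,v3}" "d \<le> v {v2,v4}" "e \<le> v {v3,v4}"
    and triangle123: "v {v1,v2,v3} \<le> max a (max b c)"
    and path134: "v {v1,v3,v4} \<le> max b e" and path124: "v {v1,v2,v4} \<le> max a d"
  shows "a + b \<le> c"
proof -
  have payoffs:
    "x {v1,v2} v1 + v {v2,v3} \<le> v {v1,v2,v3}"
    "x {v1,v2} v2 + v {v1,v3} \<le> v {v1,v2,v3}"
    "x {v1,v3} v3 + v {v1,v2} \<le> v {v1,v2,v3}"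
    "x {v1,v3} v1 + v {v3,v4} \<le> v {v1,v3,v4}"
    "x {v1,v2} v1 + v {v2,v4} \<le> v {v1,v2,v4}"
    using PMAS_pair_payoff_le[OF x N(1,2,3)] PMAS_pair_payoff_le[OF x N(2,1,3)]
      PMAS_pair_payoff_le[OF x N(3,1,2)] PMAS_pair_payoff_le[OF x N(1,3,4)]
      PMAS_pair_payoff_le[OF x N(1,2,4)] dist
    by (auto simp: insert_commute)
  have efficient:
    "x {v1,v2} v1 + x {v1,v2} v2 = v {v1,v2}"
    "x {v1,v3} v1 + x {v1,v3} v3 = v {v1,v3}"
    using PMAS_pair_efficient[OF x N(1,2)] PMAS_pair_efficient[OF x N(1,3)] dist by simp_all
  show ?thesis
    by (rule diamond_payoff_inequality[where g = "v {v1,v2,v3}" and d = d and e = e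
          and p = "x {v1,v2} v1" and p' = "x {v1,v2} v2" and q = "x {v1,v3} v1" and q' = "x {v1,v3} v3"])
      (use positive pairs triangle123 path134 path124 payoffs efficient in linarith)+
qed

lemma matching_game_diamond_diagonal_ge:
  fixes v1 v2 v3 v4 :: 'a
  assumes G: "simple_graph V E" and pos: "pos_weighted E w"
    and V: "v1 \<in> V" "v2 \<in> V" "v3 \<in> V" "v4 \<in> V"
    and dist: "distinct [v1, v2, v3, v4]"
    and edges: "{e \<in> E. e \<subseteq> {v1, v2, v3, v4}} = {{v1,v2}, {v1,v3}, {v2,v3}, {v2,v4}, {v3,v4}}"
    and x: "is_PMAS V (gamma E w) x"
  shows "w {v1,v2} + w {v1,v3} \<le> w {v2,v3}"
proof -
  define a b c d e where "a = w {v1,v2}" "b = w {v1,v3}" "c = w {v2,v3}"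
    "d = w {v2,v4}" "e = w {v3,v4}"
  have "{{v1,v2}, {v1,v3}, {v2,v3}, {v2,v4}, {v3,v4}} \<subseteq> E"
    unfolding edges[symmetric] by blast
  then have in_E: "{v1,v2} \<in> E" "{v1,v3} \<in> E" "{v2,v3} \<in> E" "{v2,v4} \<in> E" "{v3,v4} \<in> E"
    by simp_all
  then have positive: "a > 0" "b > 0" "c > 0" "d > 0" "e > 0"
    using pos unfolding pos_weighted_def a_b_c_d_e_def by simp_all
  have induced: "{f \<in> E. f \<subseteq> S} \<subseteq> {f \<in> {{v1,v2}, {v1,v3}, {v2,v3}, {v2,v4}, {v3,v4}}. u \<notin> f}"
    if "S \<subseteq> {v1, v2, v3, v4}" "u \<notin> S" for S u
    unfolding edges[symmetric] using that by blast
  have "a + b \<le> c"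
  proof (rule PMAS_diamond_inequality[OF x V dist])
    show "a \<le> gamma E w {v1,v2}" "b \<le> gamma E w {v1,v3}" "c \<le> gamma E w {v2,v3}"
      "d \<le> gamma E w {v2,v4}" "e \<le> gamma E w {v3,v4}"
      unfolding a_b_c_d_e_def by (simp_all add: weight_le_gamma in_E)
    show "gamma E w {v1,v2,v3} \<le> max a (max b c)"
      using dist positive by (intro gamma_triple_le[OF G induced[of _ v4]]) (auto simp: a_b_c_d_e_def)
    show "gamma E w {v1,v3,v4} \<le> max b e"
      using dist positive by (intro gamma_triple_le[OF G induced[of _ v2]]) (auto simp: a_b_c_d_e_def)
    show "gamma E w {v1,v2,v4} \<le> max a d"
      using dist positive by (intro gamma_triple_le[OF G induced[of _ v3]]) (auto simp: a_b_c_d_e_def)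
  qed (use positive in simp_all)
  then show ?thesis
    unfolding a_b_c_d_e_def .
qed

theorem mainTheorem7:
  fixes V :: "'a set" and E :: "'a set set" and w :: "'a set \<Rightarrow> real"
    and v1 v2 v3 v4 :: 'a
  assumes "simple_graph V E" and "pos_weighted E w"
    and "v1 \<in> V" "v2 \<in> V" "v3 \<in> V" "v4 \<in> V"
    and "distinct [v1, v2, v3, v4]"
    and "{e \<in> E. e \<subseteq> {v1, v2, v3, v4}} = {{v1,v2}, {v1,v3}, {v2,v3}, {v2,v4}, {v3,v4}}"
    and "population_monotonic V (gamma E w)"
  shows "w {v2,v3} \<ge> w {v1,v2} + w {v1,v3} \<and> w {v2,v3} \<ge> w {v2,v4} + w {v3,v4}"
proof -
  obtain x where x: "is_PMAS V (gamma E w) x"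
    using assms(9) unfolding population_monotonic_def by blast
  have "w {v1,v2} + w {v1,v3} \<le> w {v2,v3}"
    using matching_game_diamond_diagonal_ge[OF assms(1-8) x] .
  moreover have "w {v4,v2} + w {v4,v3} \<le> w {v2,v3}"
    using assms(7,8)
    by (intro matching_game_diamond_diagonal_ge[OF assms(1,2,6,4,5,3) _ _ x])
      (auto simp: insert_commute)
  ultimately show ?thesis
    by (simp add: insert_commute)
qed

end
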